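(* Let $G$ be a finite simple graph with at least one edge, and suppose $\chi(G) \in \{\Delta(G), \Delta(G)+1\}$, where $\chi(G)$ is the chromatic number and $\Delta(G)$ the maximum degree of $G$. Then ${\rm vs}_{\chi}(G) = {\rm ivs}_{\chi}(G)$.
   Context: All graphs are finite, simple and have at least one edge. The chromatic vertex stability number ${\rm vs}_{\chi}(G)$ is the minimum number of vertices of $G$ whose deletion results in a graph $H$ with $\chi(H) = \chi(G)-1$. The independent chromatic vertex stability number ${\rm ivs}_{\chi}(G)$ is the minimum cardinality of an independent set of vertices of $G$ whose deletion results in a graph $H$ with $\chi(H) = \chi(G)-1$. *)

theory Defs
  imports Main
begin

definition simple_graph :: "'a set \<Rightarrow> 'a set set \<Rightarrow> bool" where
  "simple_graph V E \<longleftrightarrow> finite V \<and> (\<forall>e\<in>E. \<exists>u v. u \<in> V \<and> v \<in> V \<and> u \<noteq> v \<and> e = {u, v})"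

definition degree :: "'a set set \<Rightarrow> 'a \<Rightarrow> nat" where
  "degree E v = card {e \<in> E. v \<in> e}"

definition max_degree :: "'a set \<Rightarrow> 'a set set \<Rightarrow> nat" where
  "max_degree V E = Max (degree E ` V)"

definition proper_colouring :: "'a set \<Rightarrow> 'a set set \<Rightarrow> nat \<Rightarrow> ('a \<Rightarrow> nat) \<Rightarrow> bool" where
  "proper_colouring V E k f \<longleftrightarrow> (\<forall>v\<in>V. f v < k) \<and> (\<forall>u v. {u, v} \<in> E \<longrightarrow> u \<noteq> v \<longrightarrow> f u \<noteq> f v)"

definition chromatic_number :: "'a set \<Rightarrow> 'a set set \<Rightarrow> nat" where
  "chromatic_number V E = (LEAST k. \<exists>f. proper_colouring V E k f)"

definition del_verts :: "'a set \<Rightarrow> 'a set set \<Rightarrow> 'a set \<Rightarrow> 'a set \<times> 'a set set" where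
  "del_verts V E S = (V - S, {e \<in> E. e \<inter> S = {}})"

definition independent_set :: "'a set \<Rightarrow> 'a set set \<Rightarrow> 'a set \<Rightarrow> bool" where
  "independent_set V E S \<longleftrightarrow> S \<subseteq> V \<and> (\<forall>e\<in>E. \<not> e \<subseteq> S)"

definition chromatic_vertex_stability :: "'a set \<Rightarrow> 'a set set \<Rightarrow> nat" where
  "chromatic_vertex_stability V E =
     (LEAST n. \<exists>S. S \<subseteq> V \<and> card S = n \<and>
        chromatic_number (fst (del_verts V E S)) (snd (del_verts V E S)) = chromatic_number V E - 1)"

definition indep_chromatic_vertex_stability :: "'a set \<Rightarrow> 'a set set \<Rightarrow> nat" where
  "indep_chromatic_vertex_stability V E =
     (LEAST n. \<exists>S. independent_set V E S \<and> card S = n \<and>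
        chromatic_number (fst (del_verts V E S)) (snd (del_verts V E S)) = chromatic_number V E - 1)"

end

(*
  Write k + 1 = chi(G); the hypothesis is only used through Delta(G) <= k + 1.  Fix a proper
  (k+1)-colouring f.  Among all sets S whose deletion leaves a k-colourable graph, take one of
  minimum size, together with a k-colouring c of G - S, such that the colouring "c outside S,
  colour k on S" disagrees with f in as few vertices as possible.  By minimality of |S| every
  vertex of S sees all k colours outside S (otherwise it could be recoloured and put back).  If
  S contained an edge uv with f v <> k, then v, having the neighbour u in S, has at most k
  neighbours outside S, so exactly one of them, w, has colour f v; putting v back with colour f
  v and deleting w instead keeps |S| and reduces the disagreement.  So S is independent, and
  since deleting an independent set lowers the chromatic number by at most one, chi(G - S) = k.
  Hence every deletion set can be replaced by an independent one of no larger size.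
*)

theory Submission
  imports Defs
begin

lemma simple_graph_edge_subset:
  assumes "simple_graph V E" "e \<in> E"
  shows "e \<subseteq> V"
proof -
  obtain u v where "u \<in> V" "v \<in> V" "e = {u, v}"
    using assms unfolding simple_graph_def by blast
  then show ?thesis by simp
qed

lemma simple_graph_edgeD:
  assumes "simple_graph V E" "{a, b} \<in> E"
  shows "a \<in> V" "b \<in> V"
  using simple_graph_edge_subset[OF assms] by auto

lemma simple_graph_finite_edges:
  assumes "simple_graph V E"
  shows "finite E"
proof (rule finite_subset)
  show "E \<subseteq> Pow V" using simple_graph_edge_subset[OF assms] by blast
  show "finite (Pow V)" using assms unfolding simple_graph_def by simp
qed

lemma simple_graph_del_verts:
  assumes "simple_graph V E"
  shows "simple_graph (V - S) {e \<in> E. e \<inter> S = {}}"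
  using assms unfolding simple_graph_def by fastforce

lemma card_neighbours_le_degree:
  assumes "finite E"
  shows "card {y \<in> A. {v, y} \<in> E} \<le> degree E v"
  unfolding degree_def
proof (rule card_inj_on_le[where f = "\<lambda>y. {v, y}"])
  show "inj_on (\<lambda>y. {v, y}) {y \<in> A. {v, y} \<in> E}"
    unfolding inj_on_def by (auto simp: doubleton_eq_iff)
  show "(\<lambda>y. {v, y}) ` {y \<in> A. {v, y} \<in> E} \<subseteq> {e \<in> E. v \<in> e}" by auto
  show "finite {e \<in> E. v \<in> e}" using assms by auto
qed

lemma proper_colouring_chromatic_number:
  assumes "simple_graph V E"
  shows "\<exists>f. proper_colouring V E (chromatic_number V E) f"
proof -
  obtain h where h: "bij_betw h V {0..<card V}"
    using assms ex_bij_betw_finite_nat unfolding simple_graph_def by blast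
  have "proper_colouring V E (card V) h"
    using h simple_graph_edgeD[OF assms]
    unfolding proper_colouring_def bij_betw_def inj_on_def by auto
  then have "\<exists>k f. proper_colouring V E k f" by blast
  then show ?thesis
    unfolding chromatic_number_def by (rule LeastI_ex)
qed

lemma chromatic_number_le:
  assumes "proper_colouring V E m f"
  shows "chromatic_number V E \<le> m"
  unfolding chromatic_number_def using assms by (blast intro: Least_le)

definition extend_colouring :: "'a set \<Rightarrow> nat \<Rightarrow> ('a \<Rightarrow> nat) \<Rightarrow> 'a \<Rightarrow> nat" where
  "extend_colouring S k c x = (if x \<in> S then k else c x)"

lemma proper_colouring_extend_independent:
  assumes "simple_graph V E" "independent_set V E I"
    and "proper_colouring (V - I) {e \<in> E. e \<inter> I = {}} m c"
  shows "proper_colouring V E (Suc m) (extend_colouring I m c)"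
  unfolding proper_colouring_def
proof (intro conjI allI impI ballI)
  have below: "c x < m" if "x \<in> V - I" for x
    using that assms(3) unfolding proper_colouring_def by blast
  show "extend_colouring I m c x < Suc m" if "x \<in> V" for x
    using that below unfolding extend_colouring_def by fastforce
  fix a b assume ab: "{a, b} \<in> E" "a \<noteq> b"
  have "a \<in> V" "b \<in> V" using simple_graph_edgeD[OF assms(1) ab(1)] by auto
  moreover have "\<not> (a \<in> I \<and> b \<in> I)" using assms(2) ab(1) unfolding independent_set_def by auto
  moreover have "c a \<noteq> c b" if "a \<notin> I" "b \<notin> I"
    using assms(3) ab that unfolding proper_colouring_def by blast
  ultimately show "extend_colouring I m c a \<noteq> extend_colouring I m c b"
    using below[of a] below[of b] unfolding extend_colouring_def by auto
qed

lemma chromatic_number_del_independent: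
  assumes "simple_graph V E" "independent_set V E I"
    and "proper_colouring (V - I) {e \<in> E. e \<inter> I = {}} (chromatic_number V E - 1) c"
  shows "chromatic_number (V - I) {e \<in> E. e \<inter> I = {}} = chromatic_number V E - 1"
proof -
  obtain g where g: "proper_colouring (V - I) {e \<in> E. e \<inter> I = {}}
      (chromatic_number (V - I) {e \<in> E. e \<inter> I = {}}) g"
    using proper_colouring_chromatic_number[OF simple_graph_del_verts[OF assms(1)]] by blast
  have "chromatic_number V E \<le> Suc (chromatic_number (V - I) {e \<in> E. e \<inter> I = {}})"
    using chromatic_number_le[OF proper_colouring_extend_independent[OF assms(1,2) g]] .
  moreover have "chromatic_number (V - I) {e \<in> E. e \<inter> I = {}} \<le> chromatic_number V E - 1"
    using chromatic_number_le[OF assms(3)] .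
  ultimately show ?thesis by linarith
qed

definition deletion_colouring ::
    "'a set \<Rightarrow> 'a set set \<Rightarrow> nat \<Rightarrow> 'a set \<Rightarrow> ('a \<Rightarrow> nat) \<Rightarrow> bool" where
  "deletion_colouring V E k S c \<longleftrightarrow>
    S \<subseteq> V \<and> proper_colouring (V - S) {e \<in> E. e \<inter> S = {}} k c"

lemma deletion_colouring_recolour:
  assumes G: "simple_graph V E" and Sc: "deletion_colouring V E k S c"
    and "v \<in> S" "i < k"
  shows "deletion_colouring V E k ((S - {v}) \<union> {y \<in> V - S. {v, y} \<in> E \<and> c y = i}) (c(v := i))"
    (is "deletion_colouring V E k ?S' ?c'")
proof -
  have SV: "S \<subseteq> V" and c: "proper_colouring (V - S) {e \<in> E. e \<inter> S = {}} k c"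
    using Sc unfolding deletion_colouring_def by auto
  have recoloured: "?c' a \<noteq> ?c' b" if "{a, b} \<in> E" "a \<noteq> b" "a = v" "b \<notin> ?S'" for a b
    using that simple_graph_edgeD[OF G that(1)] by auto
  show ?thesis
    unfolding deletion_colouring_def proper_colouring_def
  proof (intro conjI allI impI ballI)
    show "?S' \<subseteq> V" using SV by auto
    show "?c' y < k" if "y \<in> V - ?S'" for y
      using that c \<open>i < k\<close> unfolding proper_colouring_def by auto
  next
    fix a b assume ab: "{a, b} \<in> {e \<in> E. e \<inter> ?S' = {}}" "a \<noteq> b"
    consider "a = v" | "b = v" | "a \<noteq> v" "b \<noteq> v" by blast
    then show "?c' a \<noteq> ?c' b"
    proof cases
      case 1
      then show ?thesis using recoloured ab by auto
    next
      case 2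
      then show ?thesis using recoloured[of b a] ab by (auto simp: insert_commute)
    next
      case 3
      then show ?thesis using ab c unfolding proper_colouring_def by auto
    qed
  qed
qed

lemma min_deletion_colouring_sees_all_colours:
  assumes G: "simple_graph V E" and Sc: "deletion_colouring V E k S c"
    and min: "\<And>S' c'. deletion_colouring V E k S' c' \<Longrightarrow> card S \<le> card S'"
    and "x \<in> S" "j < k"
  shows "\<exists>y\<in>V - S. {x, y} \<in> E \<and> c y = j"
proof (rule ccontr)
  assume "\<not> ?thesis"
  then have "(S - {x}) \<union> {y \<in> V - S. {x, y} \<in> E \<and> c y = j} = S - {x}" by auto
  then have "deletion_colouring V E k (S - {x}) (c(x := j))"
    using deletion_colouring_recolour[OF G Sc \<open>x \<in> S\<close> \<open>j < k\<close>] by simp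
  moreover have "finite S"
    using G Sc unfolding simple_graph_def deletion_colouring_def by (blast intro: finite_subset)
  ultimately show False
    using min \<open>x \<in> S\<close> card_Diff1_less by fastforce
qed

lemma inj_on_if_lessThan_subset_image:
  assumes "finite N" "{..<k} \<subseteq> c ` N" "card N \<le> k"
  shows "inj_on c N"
proof -
  have "k \<le> card (c ` N)"
    using card_mono[OF finite_imageI[OF assms(1)] assms(2)] by simp
  then have "card (c ` N) = card N"
    using card_image_le[OF assms(1), of c] assms(3) by linarith
  then show ?thesis using eq_card_imp_inj_on assms(1) by blast
qed

definition disagreement :: "'a set \<Rightarrow> ('a \<Rightarrow> nat) \<Rightarrow> ('a \<Rightarrow> nat) \<Rightarrow> nat" where
  "disagreement V f g = card {x \<in> V. g x \<noteq> f x}"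

lemma disagreement_exchange_less:
  assumes "finite V" "v \<in> V" "v \<in> S" "w \<notin> S" "f v \<noteq> k" "c w \<noteq> f w"
  shows "disagreement V f (extend_colouring (insert w (S - {v})) k (c(v := f v)))
       < disagreement V f (extend_colouring S k c)"
  unfolding disagreement_def
proof (rule psubset_card_mono)
  show "finite {x \<in> V. extend_colouring S k c x \<noteq> f x}" using assms(1) by simp
  have "{x \<in> V. extend_colouring (insert w (S - {v})) k (c(v := f v)) x \<noteq> f x}
      \<subseteq> {x \<in> V. extend_colouring S k c x \<noteq> f x} - {v}"
    using assms(3-6) unfolding extend_colouring_def by auto
  moreover have "v \<in> {x \<in> V. extend_colouring S k c x \<noteq> f x}"
    using assms(2,3,5) unfolding extend_colouring_def by auto
  ultimately show "{x \<in> V. extend_colouring (insert w (S - {v})) k (c(v := f v)) x \<noteq> f x}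
      \<subset> {x \<in> V. extend_colouring S k c x \<noteq> f x}" by blast
qed

lemma not_independent_setE:
  assumes "simple_graph V E" "S \<subseteq> V" "\<not> independent_set V E S"
  obtains a b where "{a, b} \<in> E" "a \<noteq> b" "a \<in> S" "b \<in> S"
proof -
  obtain e where e: "e \<in> E" "e \<subseteq> S"
    using assms(2,3) unfolding independent_set_def by blast
  moreover obtain a b where "a \<noteq> b" "e = {a, b}"
    using assms(1) e(1) unfolding simple_graph_def by blast
  ultimately show ?thesis using that by blast
qed

lemma ex_deletion_colouring_less_disagreement:
  assumes G: "simple_graph V E" and deg: "\<forall>v\<in>V. degree E v \<le> Suc k"
    and f: "proper_colouring V E (Suc k) f" and Sc: "deletion_colouring V E k S c"
    and min: "\<And>S' c'. deletion_colouring V E k S' c' \<Longrightarrow> card S \<le> card S'"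
    and "\<not> independent_set V E S"
  shows "\<exists>S' c'. deletion_colouring V E k S' c' \<and> card S' = card S \<and>
    disagreement V f (extend_colouring S' k c') < disagreement V f (extend_colouring S k c)"
proof -
  have SV: "S \<subseteq> V" using Sc unfolding deletion_colouring_def by blast
  have finV: "finite V" using G unfolding simple_graph_def by blast
  have finS: "finite S" using finite_subset[OF SV finV] .
  obtain v u where vu: "{v, u} \<in> E" "v \<in> S" "u \<in> S" "f v \<noteq> k"
  proof -
    obtain a b where ab: "{a, b} \<in> E" "a \<noteq> b" "a \<in> S" "b \<in> S"
      by (rule not_independent_setE[OF G SV \<open>\<not> independent_set V E S\<close>])
    have "f a \<noteq> f b" using f ab(1,2) unfolding proper_colouring_def by blast
    then consider "f a \<noteq> k" | "f b \<noteq> k" by (cases "f a = k") auto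
    then show ?thesis
    proof cases
      case 1
      then show ?thesis using ab by (intro that[of a b]) auto
    next
      case 2
      then show ?thesis using ab by (intro that[of b a]) (auto simp: insert_commute)
    qed
  qed
  have vV: "v \<in> V" using vu(2) SV by blast
  have fv: "f v < k" using f vV vu(4) unfolding proper_colouring_def by fastforce
  define N where "N = {y \<in> V - S. {v, y} \<in> E}"
  have finN: "finite N" unfolding N_def using finV by simp
  have "u \<notin> N" unfolding N_def using vu(3) by blast
  then have "Suc (card N) = card (insert u N)" using finN by simp
  also have "\<dots> \<le> card {y \<in> V. {v, y} \<in> E}"
    using finV vu SV unfolding N_def by (intro card_mono) auto
  also have "\<dots> \<le> degree E v"
    by (rule card_neighbours_le_degree[OF simple_graph_finite_edges[OF G]])
  also have "\<dots> \<le> Suc k" using deg vV by blast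
  finally have "card N \<le> k" by simp
  moreover have all_colours: "{..<k} \<subseteq> c ` N"
  proof
    fix j assume "j \<in> {..<k}"
    then have "\<exists>y\<in>V - S. {v, y} \<in> E \<and> c y = j"
      using min by (intro min_deletion_colouring_sees_all_colours[OF G Sc _ vu(2)]) auto
    then obtain y where "y \<in> V - S" "{v, y} \<in> E" "c y = j" by blast
    then show "j \<in> c ` N" unfolding N_def by blast
  qed
  ultimately have inj: "inj_on c N" using inj_on_if_lessThan_subset_image finN by blast
  obtain w where w: "w \<in> N" "c w = f v" using all_colours fv by force
  have "y = w" if "y \<in> N" "c y = f v" for y
    using inj w that unfolding inj_on_def by metis
  then have "{y \<in> V - S. {v, y} \<in> E \<and> c y = f v} = {w}"
    using w unfolding N_def by blast
  then have "deletion_colouring V E k (insert w (S - {v})) (c(v := f v))"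
    using deletion_colouring_recolour[OF G Sc vu(2) fv] by simp
  moreover have "w \<notin> S" "{v, w} \<in> E" using w(1) unfolding N_def by blast+
  then have "card (insert w (S - {v})) = card S"
    using finS vu(2) card_Suc_Diff1 by (metis card_insert_disjoint finite_Diff Diff_iff)
  moreover have "v \<noteq> w" using vu(2) \<open>w \<notin> S\<close> by blast
  then have "c w \<noteq> f w"
    using f w(2) \<open>{v, w} \<in> E\<close> unfolding proper_colouring_def by metis
  then have "disagreement V f (extend_colouring (insert w (S - {v})) k (c(v := f v)))
      < disagreement V f (extend_colouring S k c)"
    using disagreement_exchange_less[of V v S w f k c] finV vV vu(2,4) \<open>w \<notin> S\<close> by blast
  ultimately show ?thesis by blast
qed

lemma ex_independent_deletion_colouring:
  assumes G: "simple_graph V E" and deg: "\<forall>v\<in>V. degree E v \<le> Suc k"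
    and f: "proper_colouring V E (Suc k) f" and "deletion_colouring V E k S0 c0"
  shows "\<exists>I c. independent_set V E I \<and> card I \<le> card S0 \<and> deletion_colouring V E k I c"
proof -
  define s where "s = (LEAST n. \<exists>S c. deletion_colouring V E k S c \<and> card S = n)"
  have min: "s \<le> card S" if "deletion_colouring V E k S c" for S c
    unfolding s_def using that by (blast intro: Least_le)
  have min_attained: "\<exists>S c. deletion_colouring V E k S c \<and> card S = s"
    unfolding s_def by (rule LeastI_ex) (use assms(4) in blast)
  define m where "m = (LEAST n. \<exists>S c. deletion_colouring V E k S c \<and> card S = s \<and>
    disagreement V f (extend_colouring S k c) = n)"
  have least_disagreement: "m \<le> disagreement V f (extend_colouring S k c)"
    if "deletion_colouring V E k S c" "card S = s" for S c
    unfolding m_def using that by (blast intro: Least_le)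
  have "\<exists>S c. deletion_colouring V E k S c \<and> card S = s \<and>
      disagreement V f (extend_colouring S k c) = m"
    unfolding m_def by (rule LeastI_ex) (use min_attained in blast)
  then obtain S c where Sc: "deletion_colouring V E k S c" "card S = s"
    "disagreement V f (extend_colouring S k c) = m"
    by blast
  have "independent_set V E S"
  proof (rule ccontr)
    assume "\<not> independent_set V E S"
    moreover have "card S \<le> card S'" if "deletion_colouring V E k S' c'" for S' c'
      using min[OF that] Sc(2) by simp
    ultimately obtain S' c' where "deletion_colouring V E k S' c'" "card S' = card S"
      "disagreement V f (extend_colouring S' k c') < disagreement V f (extend_colouring S k c)"
      using ex_deletion_colouring_less_disagreement[OF G deg f Sc(1)] by blast
    then show False using least_disagreement Sc by fastforce
  qed
  then show ?thesis using Sc min[OF assms(4)] by auto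
qed

lemma ex_independent_set_chromatic_drop:
  assumes G: "simple_graph V E" and "E \<noteq> {}" and "max_degree V E \<le> chromatic_number V E"
    and "S \<subseteq> V"
    and "chromatic_number (V - S) {e \<in> E. e \<inter> S = {}} = chromatic_number V E - 1"
  shows "\<exists>I. independent_set V E I \<and> card I \<le> card S \<and>
    chromatic_number (V - I) {e \<in> E. e \<inter> I = {}} = chromatic_number V E - 1"
proof -
  obtain f where f: "proper_colouring V E (chromatic_number V E) f"
    using proper_colouring_chromatic_number[OF G] by blast
  obtain e where "e \<in> E" using \<open>E \<noteq> {}\<close> by blast
  then obtain a where "a \<in> V"
    using G unfolding simple_graph_def by blast
  then have "f a < chromatic_number V E"
    using f unfolding proper_colouring_def by blast
  then obtain k where k: "chromatic_number V E = Suc k" using not0_implies_Suc by fastforce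
  have deg: "\<forall>v\<in>V. degree E v \<le> Suc k"
  proof
    fix v assume "v \<in> V"
    then have "degree E v \<le> max_degree V E"
      using G unfolding max_degree_def simple_graph_def by simp
    then show "degree E v \<le> Suc k" using assms(3) k by simp
  qed
  obtain c where "proper_colouring (V - S) {e \<in> E. e \<inter> S = {}} k c"
    using proper_colouring_chromatic_number[OF simple_graph_del_verts[OF G], of S] assms(5) k
    by auto
  then have "deletion_colouring V E k S c" unfolding deletion_colouring_def using assms(4) by blast
  moreover have "proper_colouring V E (Suc k) f" using f k by simp
  ultimately obtain I c' where
    "independent_set V E I" "card I \<le> card S" "deletion_colouring V E k I c'"
    using ex_independent_deletion_colouring[OF G deg] by blast
  then show ?thesis
    using chromatic_number_del_independent[OF G] k unfolding deletion_colouring_def by auto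
qed

lemma Least_eq_if_dominated:
  fixes P Q :: "nat \<Rightarrow> bool"
  assumes "\<And>n. Q n \<Longrightarrow> P n" and "\<And>n. P n \<Longrightarrow> \<exists>m\<le>n. Q m"
  shows "(LEAST n. P n) = (LEAST n. Q n)"
proof (cases "\<exists>n. P n")
  case True
  then obtain m where "m \<le> (LEAST n. P n)" "Q m" using assms(2) LeastI_ex by blast
  then have "(LEAST n. Q n) \<le> (LEAST n. P n)" using Least_le le_trans by blast
  moreover have "(LEAST n. P n) \<le> (LEAST n. Q n)"
    using \<open>Q m\<close> by (intro Least_le assms(1) LeastI)
  ultimately show ?thesis by simp
next
  case False
  then have "P = Q" using assms by blast
  then show ?thesis by simp
qed

theorem theorem1:
  fixes V :: "'a set" and E :: "'a set set"
  assumes "simple_graph V E"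
    and "E \<noteq> {}"
    and "chromatic_number V E = max_degree V E \<or> chromatic_number V E = max_degree V E + 1"
  shows "chromatic_vertex_stability V E = indep_chromatic_vertex_stability V E"
  unfolding chromatic_vertex_stability_def indep_chromatic_vertex_stability_def del_verts_def
    fst_conv snd_conv
proof (rule Least_eq_if_dominated)
  have "max_degree V E \<le> chromatic_number V E" using assms(3) by linarith
  then show "\<exists>m\<le>n. \<exists>I. independent_set V E I \<and> card I = m \<and>
      chromatic_number (V - I) {e \<in> E. e \<inter> I = {}} = chromatic_number V E - 1"
    if "\<exists>S. S \<subseteq> V \<and> card S = n \<and>
      chromatic_number (V - S) {e \<in> E. e \<inter> S = {}} = chromatic_number V E - 1" for n
    using that ex_independent_set_chromatic_drop[OF assms(1,2)] by blast
qed (auto simp: independent_set_def)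

end
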